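(* Let $r,k\geq 2$ and let $G$ be a non-empty $(v,b,r,k)$-configuration. Then there exist three edges of $G$ whose six endpoints are pairwise distinct.
   Context: For positive integers $v,b,r,k$, a $(v,b,r,k)$-configuration is a connected bipartite graph with $v$ vertices on one side, each of degree $r$, and $b$ vertices on the other side, each of degree $k$, containing no cycle of length $4$. *)

theory Defs
  imports Main
begin

definition bip_adj :: "('p \<times> 'b) set \<Rightarrow> (('p + 'b) \<times> ('p + 'b)) set" where
  "bip_adj I = {(Inl p, Inr q) | p q. (p, q) \<in> I} \<union> {(Inr q, Inl p) | p q. (p, q) \<in> I}"

definition bip_connected :: "'p set \<Rightarrow> 'b set \<Rightarrow> ('p \<times> 'b) set \<Rightarrow> bool" where
  "bip_connected P B I \<longleftrightarrow> P <+> B \<noteq> {} \<and>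
     (\<forall>x\<in>P <+> B. \<forall>y\<in>P <+> B. (x, y) \<in> (bip_adj I)\<^sup>*)"

definition configuration ::
  "nat \<Rightarrow> nat \<Rightarrow> nat \<Rightarrow> nat \<Rightarrow> 'p set \<Rightarrow> 'b set \<Rightarrow> ('p \<times> 'b) set \<Rightarrow> bool" where
  "configuration v b r k P B I \<longleftrightarrow>
     0 < v \<and> 0 < b \<and> 0 < r \<and> 0 < k \<and>
     finite P \<and> finite B \<and> card P = v \<and> card B = b \<and>
     I \<subseteq> P \<times> B \<and>
     (\<forall>p\<in>P. card {q\<in>B. (p, q) \<in> I} = r) \<and>
     (\<forall>q\<in>B. card {p\<in>P. (p, q) \<in> I} = k) \<and>
     bip_connected P B I \<and>
     \<comment> \<open>no cycle of length 4\<close>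
     \<not> (\<exists>p1\<in>P. \<exists>p2\<in>P. \<exists>q1\<in>B. \<exists>q2\<in>B. p1 \<noteq> p2 \<and> q1 \<noteq> q2 \<and>
          (p1, q1) \<in> I \<and> (p1, q2) \<in> I \<and> (p2, q1) \<in> I \<and> (p2, q2) \<in> I)"

end

theory Submission
  imports Defs
begin

text \<open>Take a point p1 on two blocks q1, q2, further points p2 on q1 and p3 on q2, and a further
  block q3 through p2. Since two distinct points share at most one block, p2 \<noteq> p3 and
  q3 \<noteq> q2, so the edges p1q1, p2q3, p3q2 have six distinct endpoints.\<close>

lemma card_ge_2_ex_other:
  assumes "2 \<le> card A"
  shows "\<exists>y\<in>A. y \<noteq> x"
proof (rule ccontr)
  assume "\<not> (\<exists>y\<in>A. y \<noteq> x)"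
  then have "card A \<le> card {x}"
    by (intro card_mono) auto
  with assms show False by simp
qed

lemma three_disjoint_edges:
  fixes P :: "'p set" and B :: "'b set" and I :: "('p \<times> 'b) set"
  assumes "p1 \<in> P"
    and point_deg: "\<And>p. p \<in> P \<Longrightarrow> 2 \<le> card {q\<in>B. (p, q) \<in> I}"
    and block_deg: "\<And>q. q \<in> B \<Longrightarrow> 2 \<le> card {p\<in>P. (p, q) \<in> I}"
    and no_C4: "\<And>p p' q q'. \<lbrakk>p \<in> P; p' \<in> P; q \<in> B; q' \<in> B; p \<noteq> p';
                  (p, q) \<in> I; (p, q') \<in> I; (p', q) \<in> I; (p', q') \<in> I\<rbrakk> \<Longrightarrow> q = q'"
  shows "\<exists>p1 p2 p3 q1 q2 q3. (p1, q1) \<in> I \<and> (p2, q2) \<in> I \<and> (p3, q3) \<in> I \<and>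
           p1 \<noteq> p2 \<and> p1 \<noteq> p3 \<and> p2 \<noteq> p3 \<and> q1 \<noteq> q2 \<and> q1 \<noteq> q3 \<and> q2 \<noteq> q3"
proof -
  obtain q1 where q1: "q1 \<in> B" "(p1, q1) \<in> I"
    using card_ge_2_ex_other[OF point_deg[OF \<open>p1 \<in> P\<close>]] by blast
  obtain q2 where q2: "q2 \<in> B" "(p1, q2) \<in> I" "q2 \<noteq> q1"
    using card_ge_2_ex_other[OF point_deg[OF \<open>p1 \<in> P\<close>], of q1] by auto
  obtain p2 where p2: "p2 \<in> P" "(p2, q1) \<in> I" "p2 \<noteq> p1"
    using card_ge_2_ex_other[OF block_deg[OF q1(1)], of p1] by auto
  obtain p3 where p3: "p3 \<in> P" "(p3, q2) \<in> I" "p3 \<noteq> p1"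
    using card_ge_2_ex_other[OF block_deg[OF q2(1)], of p1] by auto
  obtain q3 where q3: "q3 \<in> B" "(p2, q3) \<in> I" "q3 \<noteq> q1"
    using card_ge_2_ex_other[OF point_deg[OF p2(1)], of q1] by auto
  have "p2 \<noteq> p3"
    using no_C4[of p1 p2 q1 q2] \<open>p1 \<in> P\<close> p2 p3 q1 q2 by blast
  moreover have "q3 \<noteq> q2"
    using no_C4[of p1 p2 q1 q2] \<open>p1 \<in> P\<close> p2 q1 q2 q3 by blast
  ultimately have "(p1, q1) \<in> I \<and> (p2, q3) \<in> I \<and> (p3, q2) \<in> I \<and>
      p1 \<noteq> p2 \<and> p1 \<noteq> p3 \<and> p2 \<noteq> p3 \<and> q1 \<noteq> q3 \<and> q1 \<noteq> q2 \<and> q3 \<noteq> q2"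
    using p2 p3 q1 q2 q3 by auto
  then show ?thesis by blast
qed

theorem lemma4:
  fixes v b r k :: nat and P :: "'p set" and B :: "'b set" and I :: "('p \<times> 'b) set"
  assumes "r \<ge> 2" and "k \<ge> 2"
    and "configuration v b r k P B I"
    and "P <+> B \<noteq> {}"
  shows "\<exists>p1 p2 p3 q1 q2 q3. (p1, q1) \<in> I \<and> (p2, q2) \<in> I \<and> (p3, q3) \<in> I \<and>
           p1 \<noteq> p2 \<and> p1 \<noteq> p3 \<and> p2 \<noteq> p3 \<and> q1 \<noteq> q2 \<and> q1 \<noteq> q3 \<and> q2 \<noteq> q3"
proof -
  note conf = assms(3)[unfolded configuration_def]
  obtain p1 where "p1 \<in> P"
    using conf by fastforce
  show ?thesis
  proof (rule three_disjoint_edges[OF \<open>p1 \<in> P\<close>])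
    show "\<And>p. p \<in> P \<Longrightarrow> 2 \<le> card {q\<in>B. (p, q) \<in> I}"
      using conf assms(1) by auto
    show "\<And>q. q \<in> B \<Longrightarrow> 2 \<le> card {p\<in>P. (p, q) \<in> I}"
      using conf assms(2) by auto
  qed (use conf in blast)
qed

end
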